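(* Let $k\ge2\sqrt2$ be real. For $x=e^{i\theta}$ on the unit circle (with $\cos\theta\ne0$) set $$y_{1}(x)=\frac{k+\sqrt{k^2-16\cos^2\theta\,(3-4\cos^2\theta)}}{4\cos\theta}.$$ Then $|y_1(x)|\ge1$ for all such $x$.
   Context: $y_1(x)$ is the root of larger absolute value in $y$ of $(x+x^{-1})y^2-ky-(x^3+x^{-3})=0$ (which equals $-y^3R_k(x/y,1/(xy))$ for $R_k(x,y)=y^3-y+x^3-x+kxy$). Here $\sqrt{\cdot}$ is the principal square root. *)

theory Defs
  imports "HOL-Analysis.Analysis"
begin

definition y1 :: "real \<Rightarrow> real \<Rightarrow> complex" where
  "y1 k \<theta> = (complex_of_real k
      + csqrt (complex_of_real (k^2 - 16 * (cos \<theta>)^2 * (3 - 4 * (cos \<theta>)^2))))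
      / complex_of_real (4 * cos \<theta>)"

end

theory Submission
  imports Defs
begin

text \<open>Write \<open>c = cos \<theta>\<close> and \<open>D = k\<^sup>2 - 16 c\<^sup>2 (3 - 4 c\<^sup>2)\<close>.
  If \<open>D < 0\<close> the numerator \<open>k + i sqrt(-D)\<close> has squared modulus \<open>k\<^sup>2 - D = 16 c\<^sup>2 (3 - 4 c\<^sup>2)\<close>,
  so \<open>|y\<^sub>1|\<^sup>2 = 3 - 4 c\<^sup>2\<close>, and \<open>D < 0\<close> together with \<open>k\<^sup>2 \<ge> 8\<close> forces \<open>c\<^sup>2 < 1/2\<close>.
  If \<open>D \<ge> 0\<close> we need \<open>k + sqrt D \<ge> 4|c|\<close>; this is only in question when \<open>4|c| > k\<close>,
  hence \<open>c\<^sup>2 > 1/2\<close>, and then it follows from the identity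
  \<open>D - (4s - k)\<^sup>2 = 8s (8s\<^sup>3 - 8s + k)\<close> for \<open>s = |c|\<close>, the cubic being increasing
  for \<open>s\<^sup>2 \<ge> 1/3\<close> and equal to \<open>k - 2 sqrt 2\<close> at \<open>s = 1/sqrt 2\<close>.\<close>

lemma norm_add_csqrt_divide_of_nonneg:
  fixes k D d :: real
  assumes "0 \<le> D"
  shows "cmod ((of_real k + csqrt (of_real D)) / of_real d) = \<bar>k + sqrt D\<bar> / \<bar>d\<bar>"
proof -
  have "of_real k + csqrt (of_real D) = complex_of_real (k + sqrt D)"
    using assms by (simp add: csqrt_of_real)
  then show ?thesis
    by (simp only: norm_divide norm_of_real)
qed

lemma norm_add_csqrt_divide_of_neg:
  fixes k D d :: real
  assumes "D < 0"
  shows "cmod ((of_real k + csqrt (of_real D)) / of_real d) = sqrt (k\<^sup>2 - D) / \<bar>d\<bar>"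
proof -
  have "of_real k + csqrt (of_real D) = Complex k (sqrt (- D))"
    using assms by (simp add: complex_eq_iff)
  moreover have "cmod (Complex k (sqrt (- D))) = sqrt (k\<^sup>2 - D)"
    using assms by (simp add: cmod_def)
  ultimately show ?thesis
    by (simp add: norm_divide)
qed

lemma sq_ge_eight_of_ge_two_sqrt_two:
  fixes k :: real
  assumes "2 * sqrt 2 \<le> k"
  shows "8 \<le> k\<^sup>2"
proof -
  have "(2 * sqrt 2)\<^sup>2 \<le> k\<^sup>2"
    using assms by (intro power_mono) auto
  then show ?thesis by (simp add: power_mult_distrib)
qed

lemma cubic_nonneg_of_sq_ge_half:
  fixes k s :: real
  assumes "2 * sqrt 2 \<le> k" and "1/2 \<le> s\<^sup>2" and "0 \<le> s"
  shows "0 \<le> 8 * s^3 - 8 * s + k"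
proof -
  define a where "a = sqrt 2 / 2"
  have a_sq: "a\<^sup>2 = 1/2"
    by (simp add: a_def power_divide)
  have a_pos: "0 < a"
    by (simp add: a_def)
  have sq_le: "a\<^sup>2 \<le> s\<^sup>2"
    using assms(2) a_sq by simp
  then have "a \<le> s"
    using assms(3) by (rule power2_le_imp_le)
  then have "a * a \<le> s * a"
    using a_pos by (intro mult_right_mono) auto
  with sq_le a_sq have "0 \<le> s\<^sup>2 + s * a + a\<^sup>2 - 1"
    unfolding power2_eq_square by linarith
  then have "0 \<le> (s - a) * (s\<^sup>2 + s * a + a\<^sup>2 - 1)"
    using \<open>a \<le> s\<close> by simp
  moreover have "a^3 = a * a\<^sup>2"
    by (simp add: power3_eq_cube power2_eq_square)
  then have "8 * a^3 - 8 * a = - 4 * a"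
    using a_sq by simp
  moreover have "8 * s^3 - 8 * s + k
      = 8 * ((s - a) * (s\<^sup>2 + s * a + a\<^sup>2 - 1)) + (8 * a^3 - 8 * a + k)"
    by (simp add: algebra_simps power2_eq_square power3_eq_cube)
  ultimately show ?thesis
    using assms(1) a_def by linarith
qed

lemma sqrt_discriminant_lower_bound:
  fixes k s :: real
  assumes k: "2 * sqrt 2 \<le> k" and s: "0 < s"
    and D_nonneg: "0 \<le> k\<^sup>2 - 16 * s\<^sup>2 * (3 - 4 * s\<^sup>2)"
  shows "4 * s \<le> k + sqrt (k\<^sup>2 - 16 * s\<^sup>2 * (3 - 4 * s\<^sup>2))"
    (is "_ \<le> k + sqrt ?D")
proof (cases "4 * s \<le> k")
  case True
  moreover have "0 \<le> sqrt ?D"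
    using D_nonneg by simp
  ultimately show ?thesis by linarith
next
  case False
  have "0 \<le> k"
    using k by (smt (verit) real_sqrt_ge_zero)
  then have "k\<^sup>2 < (4 * s)\<^sup>2"
    using False by (intro power_strict_mono) auto
  then have "1/2 \<le> s\<^sup>2"
    using sq_ge_eight_of_ge_two_sqrt_two [OF k] by (simp add: power_mult_distrib)
  then have "0 \<le> 8 * s * (8 * s^3 - 8 * s + k)"
    using cubic_nonneg_of_sq_ge_half [OF k] s by simp
  moreover have "?D - (4 * s - k)\<^sup>2 = 8 * s * (8 * s^3 - 8 * s + k)"
    by (simp add: algebra_simps power2_eq_square power3_eq_cube)
  ultimately have "sqrt ((4 * s - k)\<^sup>2) \<le> sqrt ?D"
    by (intro real_sqrt_le_mono) linarith
  then show ?thesis by simp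
qed

lemma sq_lt_half_of_neg_discriminant:
  fixes k c :: real
  assumes "8 \<le> k\<^sup>2" and "k\<^sup>2 - 16 * c\<^sup>2 * (3 - 4 * c\<^sup>2) < 0"
  shows "c\<^sup>2 < 1/2"
proof (rule ccontr)
  assume "\<not> c\<^sup>2 < 1/2"
  then have "0 \<le> (4 * c\<^sup>2 - 1) * (2 * c\<^sup>2 - 1)"
    by (intro mult_nonneg_nonneg) auto
  moreover have "16 * c\<^sup>2 * (3 - 4 * c\<^sup>2) - 8 = - 8 * ((4 * c\<^sup>2 - 1) * (2 * c\<^sup>2 - 1))"
    by (simp add: algebra_simps)
  ultimately show False
    using assms by linarith
qed

theorem lemma2:
  fixes k \<theta> :: real
  assumes "k \<ge> 2 * sqrt 2"
    and "cos \<theta> \<noteq> 0"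
  shows "cmod (y1 k \<theta>) \<ge> 1"
proof -
  define c where "c = cos \<theta>"
  define D where "D = k\<^sup>2 - 16 * c\<^sup>2 * (3 - 4 * c\<^sup>2)"
  have c: "c \<noteq> 0"
    using assms(2) by (simp add: c_def)
  have y1: "y1 k \<theta> = (of_real k + csqrt (of_real D)) / of_real (4 * c)"
    by (simp add: y1_def c_def D_def)
  show ?thesis
  proof (cases "0 \<le> D")
    case True
    then have "4 * \<bar>c\<bar> \<le> k + sqrt D"
      using sqrt_discriminant_lower_bound [OF assms(1), of "\<bar>c\<bar>"] c by (simp add: D_def)
    moreover have "cmod (y1 k \<theta>) = \<bar>k + sqrt D\<bar> / \<bar>4 * c\<bar>"
      unfolding y1 using True by (rule norm_add_csqrt_divide_of_nonneg)
    ultimately show ?thesis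
      using c by (simp add: abs_mult le_divide_eq)
  next
    case False
    then have "c\<^sup>2 < 1/2"
      using sq_lt_half_of_neg_discriminant sq_ge_eight_of_ge_two_sqrt_two [OF assms(1)]
      by (simp add: D_def)
    then have "16 * c\<^sup>2 \<le> 16 * c\<^sup>2 * (3 - 4 * c\<^sup>2)"
      by (simp add: mult_le_cancel_left1)
    then have "\<bar>4 * c\<bar>\<^sup>2 \<le> k\<^sup>2 - D"
      by (simp add: D_def power_mult_distrib)
    then have "\<bar>4 * c\<bar> \<le> sqrt (k\<^sup>2 - D)"
      by (rule real_le_rsqrt)
    moreover have "cmod (y1 k \<theta>) = sqrt (k\<^sup>2 - D) / \<bar>4 * c\<bar>"
      unfolding y1 using False by (intro norm_add_csqrt_divide_of_neg) simp
    ultimately show ?thesis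
      using c by (simp add: le_divide_eq)
  qed
qed

end
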